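(* Let $\mathcal{A}=(\Sigma,Q,q_0,\delta,F)$ be an alternating Büchi automaton and let $p\in\Sigma$. If $\mathcal{A}$ is nondeterministic, then $\mathcal{A}$ is in existential normal form for $p$. If $\mathcal{A}$ is universal, then $\mathcal{A}$ is in universal normal form for $p$. If $\mathcal{A}$ is deterministic, then $\mathcal{A}$ is in both existential and universal normal form for $p$.
   Context: Let $\Sigma$ be a finite set of Boolean variables; words are infinite sequences $w\in(2^\Sigma)^\omega$ with $k$-th letter $w[k]$. $L_\Sigma=\Sigma\cup\{\neg a: a\in\Sigma\}$ is the set of literals; in a letter $\sigma\subseteq\Sigma$ the literal $a$ is true iff $a\in\sigma$ and $\neg a$ is true iff $a\notin\sigma$. $\mathbb{B}^+(S)$ denotes positive Boolean formulas (built from atoms in $S$, $\wedge$, $\vee$, true, false). An alternating Büchi automaton is $\mathcal{A}=(\Sigma,Q,q_0,\delta,F)$ with finite state set $Q$, initial state $q_0$, transition function $\delta:Q\to\mathbb{B}^+(Q\cup L_\Sigma)$ (elements of $Q\cup L_\Sigma$ are treated as atoms), and $F\subseteq Q$. A set $X\subseteq Q\cup L_\Sigma$ satisfies $\delta(q)$ if $\delta(q)$ evaluates to true when exactly the atoms in $X$ are true. A run on $w$ is a $Q$-labeled tree whose root is labeled $q_0$ such that for every node at depth $k$ labeled $q$, with $S$ the set of labels of its children, $S\cup\{\ell\in L_\Sigma:\ell \text{ true in } w[k]\}$ satisfies $\delta(q)$; it is accepting if every infinite branch visits $F$ infinitely often; $\mathcal{L}(\mathcal{A})$ is the set of words with an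 accepting run. For $p\in\Sigma$: $\mathcal{L}(\exists p.\mathcal{A})$ is the set of words $w\in(2^{\Sigma\setminus\{p\}})^\omega$ such that some $w'\in(2^\Sigma)^\omega$ with $w'[k]\setminus\{p\}=w[k]$ for all $k$ lies in $\mathcal{L}(\mathcal{A})$; $\mathcal{L}(\forall p.\mathcal{A})$ is the set of such $w$ for which every such $w'$ lies in $\mathcal{L}(\mathcal{A})$. For a formula $B$, $B[p\mapsto 1]$ replaces atom $p$ by true and atom $\neg p$ by false, and $B[p\mapsto 0]$ the reverse. The state-wise existential quantification $\exists^\circ p.\mathcal{A}$ is $(\Sigma\setminus\{p\},Q,q_0,\delta',F)$ with $\delta'(q)=\delta(q)[p\mapsto1]\vee\delta(q)[p\mapsto0]$; the state-wise universal quantification $\forall^\circ p.\mathcal{A}$ is the same with $\delta'(q)=\delta(q)[p\mapsto1]\wedge\delta(q)[p\mapsto0]$. $\mathcal{A}$ is in existential normal form for $p$ if $\mathcal{L}(\exists^\circ p.\mathcal{A})=\mathcal{L}(\exists p.\mathcal{A})$, and in universal normal form for $p$ if $\mathcal{L}(\forall^\circ p.\mathcal{A})=\mathcal{L}(\forall p.\mathcal{A})$. $\mathcal{A}$ is nondeterministic if for every state $q$ the transition formula $\delta(q)$, restricted to its state part, is a disjunction of states (i.e., for every state $q$ and every letter, once the literals are evaluated according to the letter, $\delta(q)$ is equivalent to a disjunction of states); universal if it is analogously a conjunction of states; deterministic in the standard sense (for every state and letter there is a single successor state). *)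

theory Defs
  imports Main
begin

datatype 'a pbf = PTrue | PFalse | Atom 'a | PAnd "'a pbf" "'a pbf" | POr "'a pbf" "'a pbf"

fun sat :: "'a set \<Rightarrow> 'a pbf \<Rightarrow> bool" where
  "sat X PTrue = True"
| "sat X PFalse = False"
| "sat X (Atom a) = (a \<in> X)"
| "sat X (PAnd B C) = (sat X B \<and> sat X C)"
| "sat X (POr B C) = (sat X B \<or> sat X C)"

fun atoms :: "'a pbf \<Rightarrow> 'a set" where
  "atoms PTrue = {}"
| "atoms PFalse = {}"
| "atoms (Atom a) = {a}"
| "atoms (PAnd B C) = atoms B \<union> atoms C"
| "atoms (POr B C) = atoms B \<union> atoms C"

datatype 'v lit = Pos 'v | Neg 'v

definition lits :: "'v set \<Rightarrow> 'v lit set" where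
  "lits \<Sigma> = Pos ` \<Sigma> \<union> Neg ` \<Sigma>"

fun lit_true :: "'v set \<Rightarrow> 'v lit \<Rightarrow> bool" where
  "lit_true \<sigma> (Pos a) = (a \<in> \<sigma>)"
| "lit_true \<sigma> (Neg a) = (a \<notin> \<sigma>)"

datatype ('q, 'v) atom = St 'q | Lit "'v lit"

definition true_lits :: "'v set \<Rightarrow> 'v set \<Rightarrow> ('q, 'v) atom set" where
  "true_lits \<Sigma> \<sigma> = Lit ` {l \<in> lits \<Sigma>. lit_true \<sigma> l}"

fun subst :: "'v \<Rightarrow> bool \<Rightarrow> ('q, 'v) atom pbf \<Rightarrow> ('q, 'v) atom pbf" where
  "subst p b PTrue = PTrue"
| "subst p b PFalse = PFalse"
| "subst p b (Atom (Lit (Pos a))) = (if a = p then (if b then PTrue else PFalse) else Atom (Lit (Pos a)))"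
| "subst p b (Atom (Lit (Neg a))) = (if a = p then (if b then PFalse else PTrue) else Atom (Lit (Neg a)))"
| "subst p b (Atom (St q)) = Atom (St q)"
| "subst p b (PAnd B C) = PAnd (subst p b B) (subst p b C)"
| "subst p b (POr B C) = POr (subst p b B) (subst p b C)"

record ('q, 'v) aba =
  alph :: "'v set"
  states :: "'q set"
  init :: 'q
  trans :: "'q \<Rightarrow> ('q, 'v) atom pbf"
  acc :: "'q set"

definition aba_wf :: "('q, 'v) aba \<Rightarrow> bool" where
  "aba_wf A \<longleftrightarrow> finite (alph A) \<and> finite (states A) \<and> init A \<in> states A
     \<and> acc A \<subseteq> states A
     \<and> (\<forall>q \<in> states A. atoms (trans A q) \<subseteq> St ` states A \<union> Lit ` lits (alph A))"

text \<open>A run: a Q-labelled tree, nodes are lists of child indices (prefix closed set T),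
  labelling r. A node x is at depth length x.\<close>
definition is_run :: "('q, 'v) aba \<Rightarrow> (nat \<Rightarrow> 'v set) \<Rightarrow> nat list set \<Rightarrow> (nat list \<Rightarrow> 'q) \<Rightarrow> bool" where
  "is_run A w T r \<longleftrightarrow> [] \<in> T
     \<and> (\<forall>x i. x @ [i] \<in> T \<longrightarrow> x \<in> T)
     \<and> r [] = init A
     \<and> (\<forall>x \<in> T. r x \<in> states A)
     \<and> (\<forall>x \<in> T. sat ({St (r (x @ [i])) | i. x @ [i] \<in> T} \<union> true_lits (alph A) (w (length x)))
                     (trans A (r x)))"

definition is_branch :: "nat list set \<Rightarrow> (nat \<Rightarrow> nat list) \<Rightarrow> bool" where
  "is_branch T \<pi> \<longleftrightarrow> \<pi> 0 = [] \<and> (\<forall>n. \<exists>i. \<pi> (Suc n) = \<pi> n @ [i] \<and> \<pi> (Suc n) \<in> T)"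

definition accepting :: "('q, 'v) aba \<Rightarrow> nat list set \<Rightarrow> (nat list \<Rightarrow> 'q) \<Rightarrow> bool" where
  "accepting A T r \<longleftrightarrow> (\<forall>\<pi>. is_branch T \<pi> \<longrightarrow> (\<exists>\<^sub>\<infinity>n. r (\<pi> n) \<in> acc A))"

definition lang :: "('q, 'v) aba \<Rightarrow> (nat \<Rightarrow> 'v set) set" where
  "lang A = {w. (\<forall>k. w k \<subseteq> alph A) \<and> (\<exists>T r. is_run A w T r \<and> accepting A T r)}"

definition ex_lang :: "'v \<Rightarrow> ('q, 'v) aba \<Rightarrow> (nat \<Rightarrow> 'v set) set" where
  "ex_lang p A = {w. (\<forall>k. w k \<subseteq> alph A - {p}) \<and>
      (\<exists>w'. (\<forall>k. w' k \<subseteq> alph A) \<and> (\<forall>k. w' k - {p} = w k) \<and> w' \<in> lang A)}"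

definition all_lang :: "'v \<Rightarrow> ('q, 'v) aba \<Rightarrow> (nat \<Rightarrow> 'v set) set" where
  "all_lang p A = {w. (\<forall>k. w k \<subseteq> alph A - {p}) \<and>
      (\<forall>w'. (\<forall>k. w' k \<subseteq> alph A) \<and> (\<forall>k. w' k - {p} = w k) \<longrightarrow> w' \<in> lang A)}"

definition sw_ex :: "'v \<Rightarrow> ('q, 'v) aba \<Rightarrow> ('q, 'v) aba" where
  "sw_ex p A = A\<lparr>alph := alph A - {p},
     trans := (\<lambda>q. POr (subst p True (trans A q)) (subst p False (trans A q)))\<rparr>"

definition sw_all :: "'v \<Rightarrow> ('q, 'v) aba \<Rightarrow> ('q, 'v) aba" where
  "sw_all p A = A\<lparr>alph := alph A - {p},
     trans := (\<lambda>q. PAnd (subst p True (trans A q)) (subst p False (trans A q)))\<rparr>"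

definition ex_nf :: "'v \<Rightarrow> ('q, 'v) aba \<Rightarrow> bool" where
  "ex_nf p A \<longleftrightarrow> lang (sw_ex p A) = ex_lang p A"

definition all_nf :: "'v \<Rightarrow> ('q, 'v) aba \<Rightarrow> bool" where
  "all_nf p A \<longleftrightarrow> lang (sw_all p A) = all_lang p A"

text \<open>For every state q and letter \<sigma>, once literals are evaluated according to \<sigma>,
  \<delta>(q) is equivalent to a disjunction (resp. conjunction) of the states in some D \<subseteq> Q
  (empty disjunction = false, empty conjunction = true), resp. to a single state.\<close>
definition nondet :: "('q, 'v) aba \<Rightarrow> bool" where
  "nondet A \<longleftrightarrow> (\<forall>q \<in> states A. \<forall>\<sigma> \<subseteq> alph A. \<exists>D \<subseteq> states A. \<forall>S \<subseteq> states A.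
      sat (St ` S \<union> true_lits (alph A) \<sigma>) (trans A q) \<longleftrightarrow> S \<inter> D \<noteq> {})"

definition universal :: "('q, 'v) aba \<Rightarrow> bool" where
  "universal A \<longleftrightarrow> (\<forall>q \<in> states A. \<forall>\<sigma> \<subseteq> alph A. \<exists>D \<subseteq> states A. \<forall>S \<subseteq> states A.
      sat (St ` S \<union> true_lits (alph A) \<sigma>) (trans A q) \<longleftrightarrow> D \<subseteq> S)"

definition deterministic :: "('q, 'v) aba \<Rightarrow> bool" where
  "deterministic A \<longleftrightarrow> (\<forall>q \<in> states A. \<forall>\<sigma> \<subseteq> alph A. \<exists>q' \<in> states A. \<forall>S \<subseteq> states A.
      sat (St ` S \<union> true_lits (alph A) \<sigma>) (trans A q) \<longleftrightarrow> q' \<in> S)"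

end

(* For a nondeterministic automaton, one successor suffices to satisfy a transition, so an
   accepting run of the state-wise quantified automaton can be pruned to a single branch.  The
   disjunct, delta[p := 1] or delta[p := 0], chosen at depth k along that branch fixes the k-th
   letter of an extension w' of w, and the branch is an accepting run of A on w'.

   For a universal automaton, a transition demands a fixed set of successor states, and the
   state-wise universal transition demands the union of the two sets for the two values of p.
   Unfolding these demands gives a run on w.  Along each of its branches, choosing at each step
   a value of p whose demanded set contains the next state yields an extension w' of w.  Every
   run of A on w' must contain that branch, and such a run exists and is accepting because
   w is in the language of forall p. A.

   Deterministic automata are both nondeterministic and universal. *)

theory Submission
  imports Defs "HOL-Library.Countable_Set"
begin

definition successors :: "nat list set \<Rightarrow> (nat list \<Rightarrow> 'q) \<Rightarrow> nat list \<Rightarrow> 'q set" where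
  "successors T r x = {r (x @ [i]) | i. x @ [i] \<in> T}"

lemma is_run_iff_successors:
  "is_run A w T r \<longleftrightarrow> [] \<in> T
     \<and> (\<forall>x i. x @ [i] \<in> T \<longrightarrow> x \<in> T)
     \<and> r [] = init A
     \<and> (\<forall>x \<in> T. r x \<in> states A)
     \<and> (\<forall>x \<in> T. sat (St ` successors T r x \<union> true_lits (alph A) (w (length x))) (trans A (r x)))"
proof -
  have children: "{St (r (x @ [i])) | i. x @ [i] \<in> T} = St ` successors T r x" for x
    unfolding successors_def by blast
  show ?thesis unfolding is_run_def children ..
qed

lemma successors_subset_states:
  "is_run A w T r \<Longrightarrow> successors T r x \<subseteq> states A"
  unfolding is_run_iff_successors successors_def by blast

lemma is_branch_length:
  assumes "is_branch T \<pi>"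
  shows "length (\<pi> n) = n"
proof (induction n)
  case 0
  then show ?case using assms by (simp add: is_branch_def)
next
  case (Suc n)
  from assms obtain i where "\<pi> (Suc n) = \<pi> n @ [i]" unfolding is_branch_def by blast
  with Suc show ?case by simp
qed

lemma is_branch_mem:
  assumes "is_branch T \<pi>" "[] \<in> T"
  shows "\<pi> n \<in> T"
  using assms by (cases n) (auto simp: is_branch_def)

lemma is_branch_successor:
  assumes "is_branch T \<pi>"
  shows "r (\<pi> (Suc n)) \<in> successors T r (\<pi> n)"
proof -
  obtain i where "\<pi> (Suc n) = \<pi> n @ [i]" "\<pi> n @ [i] \<in> T"
    using assms unfolding is_branch_def by metis
  then show ?thesis unfolding successors_def by auto
qed

lemma branch_exists:
  assumes "I []" and "\<And>x. I x \<Longrightarrow> x \<in> T"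
    and step: "\<And>x. I x \<Longrightarrow> \<exists>i. I (x @ [i]) \<and> R x (x @ [i])"
  obtains \<pi> where "is_branch T \<pi>" "\<And>n. I (\<pi> n)" "\<And>n. R (\<pi> n) (\<pi> (Suc n))"
proof -
  define next_index where "next_index x = (SOME i. I (x @ [i]) \<and> R x (x @ [i]))" for x
  have next_index: "I (x @ [next_index x]) \<and> R x (x @ [next_index x])" if "I x" for x
    unfolding next_index_def by (rule someI_ex) (rule step[OF that])
  define \<pi> where "\<pi> = rec_nat [] (\<lambda>_ x. x @ [next_index x])"
  have \<pi>_0: "\<pi> 0 = []" and \<pi>_Suc: "\<pi> (Suc n) = \<pi> n @ [next_index (\<pi> n)]" for n
    by (simp_all add: \<pi>_def)
  have I: "I (\<pi> n)" for n
    by (induction n) (use \<open>I []\<close> next_index in \<open>auto simp: \<pi>_0 \<pi>_Suc\<close>)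
  have "is_branch T \<pi>"
    unfolding is_branch_def using I assms(2) \<pi>_0 \<pi>_Suc by blast
  moreover have "R (\<pi> n) (\<pi> (Suc n))" for n
    using next_index[OF I] by (simp add: \<pi>_Suc)
  ultimately show ?thesis using I that by blast
qed

lemma state_sequence_in_lang:
  assumes "\<forall>k. w k \<subseteq> alph A" "qs 0 = init A" "\<And>n. qs n \<in> states A"
    and "\<And>n. sat ({St (qs (Suc n))} \<union> true_lits (alph A) (w n)) (trans A (qs n))"
    and "\<exists>\<^sub>\<infinity>n. qs n \<in> acc A"
  shows "w \<in> lang A"
proof -
  let ?r = "\<lambda>x. qs (length x)"
  have "successors UNIV ?r x = {qs (Suc (length x))}" for x
    by (auto simp: successors_def)
  then have "is_run A w UNIV ?r"
    using assms unfolding is_run_iff_successors by simp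
  moreover have "accepting A UNIV ?r"
    using assms(5) by (simp add: accepting_def is_branch_length)
  ultimately show ?thesis using assms(1) unfolding lang_def by blast
qed

lemma forced_state_sequence_infinitely_accepting:
  assumes run: "is_run A w T r" and "accepting A T r" and "qs 0 = init A"
    and forced: "\<And>n S. S \<subseteq> states A \<Longrightarrow> sat (St ` S \<union> true_lits (alph A) (w n)) (trans A (qs n))
      \<Longrightarrow> qs (Suc n) \<in> S"
  shows "\<exists>\<^sub>\<infinity>n. qs n \<in> acc A"
proof -
  let ?I = "\<lambda>x. x \<in> T \<and> r x = qs (length x)"
  have "\<exists>i. ?I (x @ [i])" if "?I x" for x
  proof -
    have "qs (Suc (length x)) \<in> successors T r x"
      using forced[OF successors_subset_states[OF run]] run that
      unfolding is_run_iff_successors by auto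
    then show ?thesis unfolding successors_def by auto
  qed
  moreover have "?I []" using run \<open>qs 0 = init A\<close> unfolding is_run_iff_successors by simp
  ultimately obtain \<pi> where "is_branch T \<pi>" and I: "\<And>n. ?I (\<pi> n)"
    using branch_exists[of ?I T "\<lambda>_ _. True"] by auto
  then have "\<exists>\<^sub>\<infinity>n. r (\<pi> n) \<in> acc A"
    using \<open>accepting A T r\<close> unfolding accepting_def by blast
  then show ?thesis using I by (simp add: is_branch_length[OF \<open>is_branch T \<pi>\<close>])
qed

lemma unfolding_tree_exists:
  fixes succ :: "'q \<Rightarrow> nat \<Rightarrow> 'q set"
  assumes "countable Q" "q0 \<in> Q" "\<And>q k. q \<in> Q \<Longrightarrow> succ q k \<subseteq> Q"
  obtains T :: "nat list set" and r where "[] \<in> T" "\<And>x i. x @ [i] \<in> T \<Longrightarrow> x \<in> T"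
    "r [] = q0" "\<And>x. r x \<in> Q" "\<And>x. x \<in> T \<Longrightarrow> successors T r x = succ (r x) (length x)"
proof -
  \<comment> \<open>The child with index i is labelled by the state enum i; it exists iff that state is in succ.\<close>
  define enum where "enum = from_nat_into Q"
  have range_enum: "range enum = Q"
    using assms(1,2) range_from_nat_into[of Q] unfolding enum_def by blast
  define r where "r x = (if x = [] then q0 else enum (last x))" for x
  define T where "T = {x. \<forall>j < length x. enum (x ! j) \<in> succ (r (take j x)) j}"
  have T_snoc: "x @ [i] \<in> T \<longleftrightarrow> x \<in> T \<and> enum i \<in> succ (r x) (length x)" for x i
    by (auto simp: T_def nth_append less_Suc_eq)
  have r_in_Q: "r x \<in> Q" for x
    using range_enum assms(2) by (auto simp: r_def)
  show ?thesis
  proof (rule that)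
    show "[] \<in> T" by (simp add: T_def)
    show "x \<in> T" if "x @ [i] \<in> T" for x i using that T_snoc by blast
    show "r [] = q0" by (simp add: r_def)
    show "r x \<in> Q" for x by (rule r_in_Q)
    fix x assume "x \<in> T"
    then have "successors T r x = {enum i | i. enum i \<in> succ (r x) (length x)}"
      by (auto simp: successors_def T_snoc r_def)
    also have "\<dots> = succ (r x) (length x)"
      using assms(3)[OF r_in_Q] range_enum by blast
    finally show "successors T r x = succ (r x) (length x)" .
  qed
qed

lemma sat_subst_iff:
  assumes "p \<in> \<Sigma>" "p \<notin> \<sigma>"
  shows "sat (St ` S \<union> true_lits (\<Sigma> - {p}) \<sigma>) (subst p b B)
     \<longleftrightarrow> sat (St ` S \<union> true_lits \<Sigma> (if b then insert p \<sigma> else \<sigma>)) B"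
  using assms by (induction p b B rule: subst.induct) (auto simp: true_lits_def lits_def)

lemma sw_ex_simps [simp]:
  "alph (sw_ex p A) = alph A - {p}" "states (sw_ex p A) = states A" "init (sw_ex p A) = init A"
  "acc (sw_ex p A) = acc A"
  "trans (sw_ex p A) q = POr (subst p True (trans A q)) (subst p False (trans A q))"
  by (simp_all add: sw_ex_def)

lemma sw_all_simps [simp]:
  "alph (sw_all p A) = alph A - {p}" "states (sw_all p A) = states A" "init (sw_all p A) = init A"
  "acc (sw_all p A) = acc A"
  "trans (sw_all p A) q = PAnd (subst p True (trans A q)) (subst p False (trans A q))"
  by (simp_all add: sw_all_def)

lemma sat_trans_sw_ex_iff:
  assumes "p \<in> alph A" "p \<notin> \<sigma>"
  shows "sat (St ` S \<union> true_lits (alph (sw_ex p A)) \<sigma>) (trans (sw_ex p A) q)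
     \<longleftrightarrow> (\<exists>b. sat (St ` S \<union> true_lits (alph A) (if b then insert p \<sigma> else \<sigma>)) (trans A q))"
  unfolding sw_ex_simps sat.simps ex_bool_eq sat_subst_iff[OF assms] by simp

lemma sat_trans_sw_all_iff:
  assumes "p \<in> alph A" "p \<notin> \<sigma>"
  shows "sat (St ` S \<union> true_lits (alph (sw_all p A)) \<sigma>) (trans (sw_all p A) q)
     \<longleftrightarrow> (\<forall>b. sat (St ` S \<union> true_lits (alph A) (if b then insert p \<sigma> else \<sigma>)) (trans A q))"
  unfolding sw_all_simps sat.simps all_bool_eq sat_subst_iff[OF assms] by simp

lemma nondet_sat_singleton:
  assumes "nondet A" "q \<in> states A" "\<sigma> \<subseteq> alph A" "S \<subseteq> states A"
    and "sat (St ` S \<union> true_lits (alph A) \<sigma>) (trans A q)"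
  obtains q' where "q' \<in> S" "sat ({St q'} \<union> true_lits (alph A) \<sigma>) (trans A q)"
proof -
  from assms(1)[unfolded nondet_def, rule_format, OF assms(2,3)] obtain D where
    D: "\<And>S'. S' \<subseteq> states A \<Longrightarrow> sat (St ` S' \<union> true_lits (alph A) \<sigma>) (trans A q) \<longleftrightarrow> S' \<inter> D \<noteq> {}"
    by blast
  from D[OF assms(4)] assms(5) obtain q' where "q' \<in> S" "q' \<in> D" by blast
  moreover from this have "sat (St ` {q'} \<union> true_lits (alph A) \<sigma>) (trans A q)"
    using D[of "{q'}"] assms(4) by blast
  ultimately show ?thesis using that by simp
qed

definition required_successors :: "('q, 'v) aba \<Rightarrow> 'q \<Rightarrow> 'v set \<Rightarrow> 'q set" where
  "required_successors A q \<sigma> = (SOME D. D \<subseteq> states A \<and>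
     (\<forall>S \<subseteq> states A. sat (St ` S \<union> true_lits (alph A) \<sigma>) (trans A q) \<longleftrightarrow> D \<subseteq> S))"

lemma required_successors:
  assumes "universal A" "q \<in> states A" "\<sigma> \<subseteq> alph A"
  shows "required_successors A q \<sigma> \<subseteq> states A"
    and "S \<subseteq> states A \<Longrightarrow>
      sat (St ` S \<union> true_lits (alph A) \<sigma>) (trans A q) \<longleftrightarrow> required_successors A q \<sigma> \<subseteq> S"
proof -
  have "\<exists>D. D \<subseteq> states A \<and>
     (\<forall>S \<subseteq> states A. sat (St ` S \<union> true_lits (alph A) \<sigma>) (trans A q) \<longleftrightarrow> D \<subseteq> S)"
    using assms unfolding universal_def by blast
  from someI_ex[OF this] show "required_successors A q \<sigma> \<subseteq> states A"
    and "S \<subseteq> states A \<Longrightarrow>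
      sat (St ` S \<union> true_lits (alph A) \<sigma>) (trans A q) \<longleftrightarrow> required_successors A q \<sigma> \<subseteq> S"
    unfolding required_successors_def by blast+
qed

lemma sat_trans_sw_all_required_successors:
  assumes "universal A" "p \<in> alph A" "q \<in> states A" "\<sigma> \<subseteq> alph A - {p}"
  shows "sat (St ` (required_successors A q (insert p \<sigma>) \<union> required_successors A q \<sigma>)
      \<union> true_lits (alph (sw_all p A)) \<sigma>) (trans (sw_all p A) q)"
proof -
  have letters: "insert p \<sigma> \<subseteq> alph A" "\<sigma> \<subseteq> alph A" "p \<notin> \<sigma>"
    using assms(2,4) by auto
  have "sat (St ` (required_successors A q (insert p \<sigma>) \<union> required_successors A q \<sigma>)
      \<union> true_lits (alph A) \<sigma>') (trans A q)" if "\<sigma>' \<in> {insert p \<sigma>, \<sigma>}" for \<sigma>'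
    using that required_successors[OF assms(1,3) letters(1)] required_successors[OF assms(1,3) letters(2)]
    by auto
  then show ?thesis
    unfolding sat_trans_sw_all_iff[OF assms(2) letters(3)] by simp
qed

lemma universal_required_sequence_infinitely_accepting:
  assumes "universal A" "w \<in> lang A" "qs 0 = init A" "\<And>n. qs n \<in> states A"
    and "\<And>n. qs (Suc n) \<in> required_successors A (qs n) (w n)"
  shows "\<exists>\<^sub>\<infinity>n. qs n \<in> acc A"
proof -
  have w: "w n \<subseteq> alph A" for n
    using assms(2) unfolding lang_def by blast
  obtain T r where "is_run A w T r" "accepting A T r"
    using assms(2) unfolding lang_def by blast
  then show ?thesis
  proof (rule forced_state_sequence_infinitely_accepting)
    fix n S assume "S \<subseteq> states A" "sat (St ` S \<union> true_lits (alph A) (w n)) (trans A (qs n))"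
    then show "qs (Suc n) \<in> S"
      using required_successors(2)[OF assms(1,4) w] assms(5) by blast
  qed (rule assms(3))
qed

lemma ex_lang_subset_lang_sw_ex:
  assumes "p \<in> alph A"
  shows "ex_lang p A \<subseteq> lang (sw_ex p A)"
proof
  fix w assume "w \<in> ex_lang p A"
  then obtain w' where w: "\<forall>k. w k \<subseteq> alph A - {p}" and w'_ext: "\<forall>k. w' k - {p} = w k"
    and "w' \<in> lang A"
    unfolding ex_lang_def by blast
  then obtain T r where run: "is_run A w' T r" and "accepting A T r"
    unfolding lang_def by blast
  have w'_eq: "w' k = (if p \<in> w' k then insert p (w k) else w k)" for k
    using w'_ext by auto
  have "sat (St ` successors T r x \<union> true_lits (alph (sw_ex p A)) (w (length x))) (trans (sw_ex p A) (r x))"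
    if "x \<in> T" for x
  proof -
    have "sat (St ` successors T r x \<union> true_lits (alph A) (w' (length x))) (trans A (r x))"
      using run that unfolding is_run_iff_successors by blast
    then have "\<exists>b. sat (St ` successors T r x \<union>
        true_lits (alph A) (if b then insert p (w (length x)) else w (length x))) (trans A (r x))"
      by (subst (asm) w'_eq) blast
    moreover have "p \<notin> w (length x)" using w by blast
    ultimately show ?thesis using sat_trans_sw_ex_iff[OF assms] by blast
  qed
  with run have "is_run (sw_ex p A) w T r"
    unfolding is_run_iff_successors by simp
  moreover have "accepting (sw_ex p A) T r"
    using \<open>accepting A T r\<close> by (simp add: accepting_def)
  ultimately show "w \<in> lang (sw_ex p A)"
    using w unfolding lang_def by auto
qed

lemma lang_sw_all_subset_all_lang:
  assumes "p \<in> alph A"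
  shows "lang (sw_all p A) \<subseteq> all_lang p A"
proof
  fix w assume "w \<in> lang (sw_all p A)"
  then obtain T r where w: "\<forall>k. w k \<subseteq> alph A - {p}" and run: "is_run (sw_all p A) w T r"
    and "accepting (sw_all p A) T r"
    unfolding lang_def by auto
  have "w' \<in> lang A" if w': "\<forall>k. w' k \<subseteq> alph A" and w'_ext: "\<forall>k. w' k - {p} = w k" for w'
  proof -
    have w'_eq: "w' k = (if p \<in> w' k then insert p (w k) else w k)" for k
      using w'_ext by auto
    have "sat (St ` successors T r x \<union> true_lits (alph A) (w' (length x))) (trans A (r x))"
      if "x \<in> T" for x
    proof -
      have "p \<notin> w (length x)" using w by blast
      moreover have "sat (St ` successors T r x \<union> true_lits (alph (sw_all p A)) (w (length x)))
          (trans (sw_all p A) (r x))"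
        using run that unfolding is_run_iff_successors by blast
      ultimately show ?thesis
        using sat_trans_sw_all_iff[OF assms] by (subst w'_eq) blast
    qed
    with run have "is_run A w' T r"
      unfolding is_run_iff_successors by simp
    moreover have "accepting A T r"
      using \<open>accepting (sw_all p A) T r\<close> by (simp add: accepting_def)
    ultimately show ?thesis using w' unfolding lang_def by blast
  qed
  with w show "w \<in> all_lang p A"
    unfolding all_lang_def by auto
qed

lemma nondet_sw_ex_run_witnessing_child:
  assumes "p \<in> alph A" "nondet A" and run: "is_run (sw_ex p A) w T r"
    and w: "w k \<subseteq> alph A - {p}" and "x \<in> T" "length x = k"
  obtains i b where "x @ [i] \<in> T"
    "sat ({St (r (x @ [i]))} \<union> true_lits (alph A) (if b then insert p (w k) else w k)) (trans A (r x))"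
proof -
  have "p \<notin> w k" using w by blast
  moreover have "sat (St ` successors T r x \<union> true_lits (alph (sw_ex p A)) (w k))
      (trans (sw_ex p A) (r x))"
    using run \<open>x \<in> T\<close> \<open>length x = k\<close> unfolding is_run_iff_successors by blast
  ultimately obtain b where
    "sat (St ` successors T r x \<union> true_lits (alph A) (if b then insert p (w k) else w k)) (trans A (r x))"
    using sat_trans_sw_ex_iff[OF assms(1)] by blast
  moreover have "successors T r x \<subseteq> states A"
    using successors_subset_states[OF run] by simp
  moreover have "r x \<in> states A" "(if b then insert p (w k) else w k) \<subseteq> alph A"
    using run \<open>x \<in> T\<close> w assms(1) unfolding is_run_iff_successors by auto
  ultimately obtain q' where "q' \<in> successors T r x"
    "sat ({St q'} \<union> true_lits (alph A) (if b then insert p (w k) else w k)) (trans A (r x))"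
    using nondet_sat_singleton[OF assms(2)] by metis
  then show ?thesis using that unfolding successors_def by blast
qed

lemma lang_sw_ex_subset_ex_lang:
  assumes "p \<in> alph A" "nondet A"
  shows "lang (sw_ex p A) \<subseteq> ex_lang p A"
proof
  fix w assume "w \<in> lang (sw_ex p A)"
  then obtain T r where w: "\<forall>k. w k \<subseteq> alph A - {p}" and run: "is_run (sw_ex p A) w T r"
    and "accepting (sw_ex p A) T r"
    unfolding lang_def by auto
  define ext where "ext b k = (if b then insert p (w k) else w k)" for b k
  have ext_alph: "ext b k \<subseteq> alph A" for b k
    using w assms(1) by (auto simp: ext_def)
  have r_states: "r x \<in> states A" if "x \<in> T" for x
    using run that unfolding is_run_iff_successors by simp
  let ?R = "\<lambda>x y. \<exists>b. sat ({St (r y)} \<union> true_lits (alph A) (ext b (length x))) (trans A (r x))"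
  have step: "\<exists>i. x @ [i] \<in> T \<and> ?R x (x @ [i])" if "x \<in> T" for x
    using nondet_sw_ex_run_witnessing_child[OF assms run w[rule_format] that refl]
    unfolding ext_def by metis
  have "[] \<in> T" using run unfolding is_run_def by blast
  obtain \<pi> where \<pi>: "is_branch T \<pi>" "\<And>n. \<pi> n \<in> T" "\<And>n. ?R (\<pi> n) (\<pi> (Suc n))"
    using branch_exists[of "\<lambda>x. x \<in> T" T ?R, OF \<open>[] \<in> T\<close> _ step] by blast
  define qs where "qs n = r (\<pi> n)" for n
  have "\<forall>n. \<exists>b. sat ({St (qs (Suc n))} \<union> true_lits (alph A) (ext b n)) (trans A (qs n))"
    using \<pi>(3) by (simp add: qs_def is_branch_length[OF \<pi>(1)])
  then obtain b where b: "\<And>n. sat ({St (qs (Suc n))} \<union> true_lits (alph A) (ext (b n) n)) (trans A (qs n))"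
    by metis
  have "(\<lambda>n. ext (b n) n) \<in> lang A"
  proof (rule state_sequence_in_lang)
    show "qs 0 = init A"
      using run \<pi>(1) unfolding qs_def is_run_iff_successors is_branch_def by simp
    show "qs n \<in> states A" for n
      using r_states \<pi>(2) by (simp add: qs_def)
    show "\<exists>\<^sub>\<infinity>n. qs n \<in> acc A"
      using \<open>accepting (sw_ex p A) T r\<close> \<pi>(1) unfolding accepting_def qs_def by simp
  qed (use ext_alph b in auto)
  moreover have "ext (b k) k - {p} = w k" for k
    using w by (auto simp: ext_def)
  ultimately show "w \<in> ex_lang p A"
    using w ext_alph unfolding ex_lang_def by (intro CollectI conjI exI[of _ "\<lambda>n. ext (b n) n"]) auto
qed

lemma universal_extension_sequence_infinitely_accepting:
  assumes "universal A" "p \<in> alph A" "w \<in> all_lang p A" "qs 0 = init A" "\<And>n. qs n \<in> states A"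
    and "\<And>n. qs (Suc n) \<in> required_successors A (qs n) (insert p (w n))
                         \<union> required_successors A (qs n) (w n)"
  shows "\<exists>\<^sub>\<infinity>n. qs n \<in> acc A"
proof -
  define w' where "w' n = (if qs (Suc n) \<in> required_successors A (qs n) (insert p (w n))
    then insert p (w n) else w n)" for n
  have w: "\<forall>k. w k \<subseteq> alph A - {p}"
    and extension_in_lang: "\<And>v. \<forall>k. v k \<subseteq> alph A \<Longrightarrow> \<forall>k. v k - {p} = w k \<Longrightarrow> v \<in> lang A"
    using assms(3) unfolding all_lang_def by blast+
  have "w' \<in> lang A"
    by (rule extension_in_lang) (use w assms(2) in \<open>auto simp: w'_def\<close>)
  moreover have "qs (Suc n) \<in> required_successors A (qs n) (w' n)" for n
    using assms(6)[of n] by (auto simp: w'_def)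
  ultimately show ?thesis
    using universal_required_sequence_infinitely_accepting[of A w' qs] assms(1,4,5) by blast
qed

lemma all_lang_subset_lang_sw_all:
  assumes "finite (states A)" "p \<in> alph A" "universal A"
  shows "all_lang p A \<subseteq> lang (sw_all p A)"
proof
  fix w assume "w \<in> all_lang p A"
  then have w: "\<forall>k. w k \<subseteq> alph A - {p}"
    unfolding all_lang_def by blast
  have letters: "insert p (w k) \<subseteq> alph A" "w k \<subseteq> alph A" for k
    using w assms(2) by auto
  have "w \<in> lang A"
    using \<open>w \<in> all_lang p A\<close> w unfolding all_lang_def by auto
  then have "init A \<in> states A"
    unfolding lang_def is_run_def by auto
  define succ where "succ q k = required_successors A q (insert p (w k))
                               \<union> required_successors A q (w k)" for q k
  have succ_states: "succ q k \<subseteq> states A" if "q \<in> states A" for q k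
    using required_successors(1)[OF assms(3) that letters(1)]
      required_successors(1)[OF assms(3) that letters(2)] by (simp add: succ_def)
  obtain T r where T: "[] \<in> T" "\<And>x i. x @ [i] \<in> T \<Longrightarrow> x \<in> T" and "r [] = init A"
    and r_states: "\<And>x. r x \<in> states A"
    and successors_T: "\<And>x. x \<in> T \<Longrightarrow> successors T r x = succ (r x) (length x)"
    using unfolding_tree_exists[of "states A" "init A" succ] countable_finite[OF assms(1)]
      \<open>init A \<in> states A\<close> succ_states by blast
  have "sat (St ` successors T r x \<union> true_lits (alph (sw_all p A)) (w (length x)))
      (trans (sw_all p A) (r x))" if "x \<in> T" for x
    unfolding successors_T[OF that] succ_def
    using sat_trans_sw_all_required_successors[OF assms(3,2) r_states w[rule_format]] .
  with T \<open>r [] = init A\<close> r_states have "is_run (sw_all p A) w T r"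
    unfolding is_run_iff_successors by simp
  moreover have "accepting (sw_all p A) T r"
    unfolding accepting_def
  proof (intro allI impI)
    fix \<pi> assume \<pi>: "is_branch T \<pi>"
    have "r (\<pi> (Suc n)) \<in> succ (r (\<pi> n)) n" for n
      using is_branch_successor[OF \<pi>, of r n] successors_T[OF is_branch_mem[OF \<pi> T(1)]]
      by (simp add: is_branch_length[OF \<pi>])
    moreover have "r (\<pi> 0) = init A"
      using \<pi> \<open>r [] = init A\<close> unfolding is_branch_def by simp
    ultimately show "\<exists>\<^sub>\<infinity>n. r (\<pi> n) \<in> acc (sw_all p A)"
      using universal_extension_sequence_infinitely_accepting[OF assms(3,2) \<open>w \<in> all_lang p A\<close>,
          of "\<lambda>n. r (\<pi> n)"] r_states
      unfolding succ_def by simp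
  qed
  ultimately show "w \<in> lang (sw_all p A)"
    using w unfolding lang_def by auto
qed

lemma nondet_imp_ex_nf: "p \<in> alph A \<Longrightarrow> nondet A \<Longrightarrow> ex_nf p A"
  unfolding ex_nf_def by (intro equalityI lang_sw_ex_subset_ex_lang ex_lang_subset_lang_sw_ex)

lemma universal_imp_all_nf: "finite (states A) \<Longrightarrow> p \<in> alph A \<Longrightarrow> universal A \<Longrightarrow> all_nf p A"
  unfolding all_nf_def by (intro equalityI lang_sw_all_subset_all_lang all_lang_subset_lang_sw_all)

lemma deterministic_imp_nondet:
  assumes "deterministic A"
  shows "nondet A"
  unfolding nondet_def
proof (intro ballI allI impI)
  fix q \<sigma> assume "q \<in> states A" "\<sigma> \<subseteq> alph A"
  with assms obtain q' where "q' \<in> states A"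
    "\<forall>S \<subseteq> states A. sat (St ` S \<union> true_lits (alph A) \<sigma>) (trans A q) \<longleftrightarrow> q' \<in> S"
    unfolding deterministic_def by blast
  then show "\<exists>D \<subseteq> states A. \<forall>S \<subseteq> states A.
      sat (St ` S \<union> true_lits (alph A) \<sigma>) (trans A q) \<longleftrightarrow> S \<inter> D \<noteq> {}"
    by (intro exI[of _ "{q'}"]) auto
qed

lemma deterministic_imp_universal:
  assumes "deterministic A"
  shows "universal A"
  unfolding universal_def
proof (intro ballI allI impI)
  fix q \<sigma> assume "q \<in> states A" "\<sigma> \<subseteq> alph A"
  with assms obtain q' where "q' \<in> states A"
    "\<forall>S \<subseteq> states A. sat (St ` S \<union> true_lits (alph A) \<sigma>) (trans A q) \<longleftrightarrow> q' \<in> S"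
    unfolding deterministic_def by blast
  then show "\<exists>D \<subseteq> states A. \<forall>S \<subseteq> states A.
      sat (St ` S \<union> true_lits (alph A) \<sigma>) (trans A q) \<longleftrightarrow> D \<subseteq> S"
    by (intro exI[of _ "{q'}"]) auto
qed

theorem mainTheorem1:
  fixes A :: "('q, 'v) aba" and p :: 'v
  assumes "aba_wf A" and "p \<in> alph A"
  shows "(nondet A \<longrightarrow> ex_nf p A)
       \<and> (universal A \<longrightarrow> all_nf p A)
       \<and> (deterministic A \<longrightarrow> ex_nf p A \<and> all_nf p A)"
proof -
  have "finite (states A)"
    using assms(1) by (simp add: aba_wf_def)
  have ex_nf: "nondet A \<Longrightarrow> ex_nf p A"
    by (rule nondet_imp_ex_nf[OF assms(2)])
  have all_nf: "universal A \<Longrightarrow> all_nf p A"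
    by (rule universal_imp_all_nf[OF \<open>finite (states A)\<close> assms(2)])
  show ?thesis
    using ex_nf all_nf deterministic_imp_nondet deterministic_imp_universal by blast
qed

end
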